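(* Let $i\geq 5$ and $j\geq 1$ be integers. Then $$R_1^{\mathcal{CA}}(i,j)=\begin{cases}2j-1, & \text{if } j \text{ is odd},\\ 2j-2, & \text{if } j \text{ is even},\end{cases}$$ where $\mathcal{CA}$ is the class of cacti.
   Context: All graphs are finite and simple. For a graph $G$ and a nonnegative integer $k$, a $k$-sparse $j$-set is a set of $j$ vertices of $G$ inducing a subgraph of maximum degree at most $k$; a $k$-dense $i$-set is a set of $i$ vertices of $G$ that is $k$-sparse in the complement of $G$. For a graph class $\mathcal{G}$, $R_k^{\mathcal{G}}(i,j)$ is the smallest natural number $n$ such that every graph on $n$ vertices in $\mathcal{G}$ has either a $k$-dense $i$-set or a $k$-sparse $j$-set. A cactus is a graph (not necessarily connected) in which every block (maximal 2-connected subgraph, bridge, or isolated vertex) is a cycle, a single edge, or a single vertex. *)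

theory Defs
  imports Main
begin

definition simple_graph :: "'a set \<Rightarrow> ('a \<Rightarrow> 'a \<Rightarrow> bool) \<Rightarrow> bool" where
  "simple_graph V E \<longleftrightarrow> finite V \<and> (\<forall>x y. E x y \<longrightarrow> x \<in> V \<and> y \<in> V)
     \<and> (\<forall>x y. E x y \<longrightarrow> E y x) \<and> (\<forall>x. \<not> E x x)"

definition deg_in :: "('a \<Rightarrow> 'a \<Rightarrow> bool) \<Rightarrow> 'a set \<Rightarrow> 'a \<Rightarrow> nat" where
  "deg_in E S x = card {y \<in> S. E x y}"

definition connected_in :: "('a \<Rightarrow> 'a \<Rightarrow> bool) \<Rightarrow> 'a set \<Rightarrow> bool" where
  "connected_in E S \<longleftrightarrow> S \<noteq> {} \<and>
     (\<forall>u\<in>S. \<forall>v\<in>S. (\<lambda>x y. E x y \<and> x \<in> S \<and> y \<in> S)\<^sup>*\<^sup>* u v)"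

definition nonseparable :: "('a \<Rightarrow> 'a \<Rightarrow> bool) \<Rightarrow> 'a set \<Rightarrow> bool" where
  "nonseparable E S \<longleftrightarrow> connected_in E S \<and>
     (\<forall>v\<in>S. S - {v} \<noteq> {} \<longrightarrow> connected_in E (S - {v}))"

definition is_block :: "'a set \<Rightarrow> ('a \<Rightarrow> 'a \<Rightarrow> bool) \<Rightarrow> 'a set \<Rightarrow> bool" where
  "is_block V E B \<longleftrightarrow> B \<subseteq> V \<and> nonseparable E B \<and>
     (\<forall>B'. B \<subset> B' \<and> B' \<subseteq> V \<longrightarrow> \<not> nonseparable E B')"

text \<open>Cactus: every block is a single vertex, a single edge, or a cycle
  (a cycle = connected 2-regular graph on at least 3 vertices).\<close>
definition cactus :: "'a set \<Rightarrow> ('a \<Rightarrow> 'a \<Rightarrow> bool) \<Rightarrow> bool" where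
  "cactus V E \<longleftrightarrow> simple_graph V E \<and>
     (\<forall>B. is_block V E B \<longrightarrow> card B \<le> 2 \<or> (card B \<ge> 3 \<and> (\<forall>x\<in>B. deg_in E B x = 2)))"

definition sparse_set :: "('a \<Rightarrow> 'a \<Rightarrow> bool) \<Rightarrow> 'a set \<Rightarrow> nat \<Rightarrow> nat \<Rightarrow> 'a set \<Rightarrow> bool" where
  "sparse_set E V k j S \<longleftrightarrow> S \<subseteq> V \<and> card S = j \<and> (\<forall>x\<in>S. deg_in E S x \<le> k)"

definition dense_set :: "('a \<Rightarrow> 'a \<Rightarrow> bool) \<Rightarrow> 'a set \<Rightarrow> nat \<Rightarrow> nat \<Rightarrow> 'a set \<Rightarrow> bool" where
  "dense_set E V k i S \<longleftrightarrow> sparse_set (\<lambda>x y. x \<noteq> y \<and> \<not> E x y) V k i S"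

text \<open>R_k^C(i,j): smallest n such that every graph in class C on n vertices
  (w.l.o.g. vertex set {0..<n}) has a k-dense i-set or a k-sparse j-set.\<close>
definition ramsey_class ::
  "(nat set \<Rightarrow> (nat \<Rightarrow> nat \<Rightarrow> bool) \<Rightarrow> bool) \<Rightarrow> nat \<Rightarrow> nat \<Rightarrow> nat \<Rightarrow> nat" where
  "ramsey_class C k i j = (LEAST n. \<forall>E. simple_graph {0..<n} E \<and> C {0..<n} E \<longrightarrow>
      (\<exists>S. dense_set E {0..<n} k i S) \<or> (\<exists>S. sparse_set E {0..<n} k j S))"

end

theory Submission
  imports Defs
begin

text \<open>
  In a cactus every nonseparable set of at least three vertices induces degrees at most 2.
  Hence a 1-dense set of \<open>i \<ge> 5\<close> vertices cannot exist: any two non-adjacent vertices of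
  it have a common neighbour avoiding any given third vertex, so it is nonseparable, while
  its inner degrees are at least \<open>i - 2\<close>. So the Ramsey number is the least \<open>n\<close> such that
  every cactus on \<open>n\<close> vertices has a 1-sparse \<open>j\<close>-set, and this 1-sparse number of
  \<open>n\<close>-vertex cacti is exactly \<open>b(n) = 2 (n div 4) + min (n mod 4) 2\<close>.

  Lower bound: the disjoint union of 4-cycles on \<open>n\<close> vertices is a cactus, and a 1-sparse
  set meets each 4-cycle in at most two vertices. Upper bound, by induction: take a longest
  path \<open>v\<^sub>0 v\<^sub>1 v\<^sub>2 \<dots>\<close>; all neighbours of \<open>v\<^sub>0\<close> lie on it, and the cactus
  condition forbids two cycles through the edge \<open>v\<^sub>1 v\<^sub>2\<close>. A short case analysis then
  yields an isolated vertex or two vertices whose closed neighbourhood has at most four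
  vertices. Put them into the sparse set, delete their closed neighbourhood and use that
  \<open>b\<close> is subadditive with \<open>b(1) = 1\<close> and \<open>b(4) = 2\<close>.
\<close>

section \<open>The sparse bound\<close>

definition sparse_bound :: "nat \<Rightarrow> nat" where
  "sparse_bound n = 2 * (n div 4) + min (n mod 4) 2"

lemma sparse_bound_4: "sparse_bound (4 * q + r) = 2 * q + sparse_bound r"
  unfolding sparse_bound_def by simp

lemma sparse_bound_less_4: "r < 4 \<Longrightarrow> sparse_bound r = min r 2"
  unfolding sparse_bound_def by simp

lemma sparse_bound_add_le: "sparse_bound (a + b) \<le> sparse_bound a + sparse_bound b"
proof -
  define r s where "r = a mod 4" and "s = b mod 4"
  have a: "a = 4 * (a div 4) + r" and b: "b = 4 * (b div 4) + s" and "r < 4" "s < 4"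
    unfolding r_def s_def by simp_all
  have "sparse_bound (r + s) \<le> min r 2 + min s 2"
  proof (cases "r + s < 4")
    case True
    then show ?thesis by (simp add: sparse_bound_less_4)
  next
    case False
    then have "sparse_bound (r + s) = sparse_bound (4 * 1 + (r + s - 4))" by simp
    also have "\<dots> = 2 + min (r + s - 4) 2"
      using \<open>r < 4\<close> \<open>s < 4\<close> by (simp only: sparse_bound_4 sparse_bound_less_4)
    finally show ?thesis using \<open>r < 4\<close> \<open>s < 4\<close> False by linarith
  qed
  moreover have "a + b = 4 * (a div 4 + b div 4) + (r + s)"
    unfolding distrib_left using a b by linarith
  then have "sparse_bound (a + b) = 2 * (a div 4 + b div 4) + sparse_bound (r + s)"
    by (simp only: sparse_bound_4)
  moreover have "sparse_bound a = 2 * (a div 4) + min r 2" "sparse_bound b = 2 * (b div 4) + min s 2"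
    unfolding sparse_bound_def r_def s_def by simp_all
  ultimately show ?thesis unfolding distrib_left by linarith
qed

lemma mono_sparse_bound: "mono sparse_bound"
  unfolding mono_iff_le_Suc sparse_bound_def by (auto simp: div_Suc mod_Suc)

lemma sparse_bound_le_2: "n \<le> 4 \<Longrightarrow> sparse_bound n \<le> 2"
  by (cases "n = 4") (simp_all add: sparse_bound_def)

lemma sparse_bound_1: "sparse_bound 1 = 1"
  by (simp add: sparse_bound_def)

lemma sparse_bound_ge_iff:
  assumes "1 \<le> j"
  shows "j \<le> sparse_bound n \<longleftrightarrow> (if odd j then 2 * j - 1 else 2 * j - 2) \<le> n"
proof -
  define N where "N = (if odd j then 2 * j - 1 else 2 * j - 2)"
  define s where "s = (j - 1) div 2"
  have threshold: "sparse_bound N = j \<and> sparse_bound (N - 1) < j"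
  proof (cases "odd j")
    case True
    then have "j = 2 * s + 1" "N = 4 * s + 1" "N - 1 = 4 * s + 0"
      unfolding N_def s_def by presburger+
    then show ?thesis by (simp only: sparse_bound_4) (simp add: sparse_bound_def)
  next
    case False
    then have "j = 2 * s + 2" "N = 4 * s + 2" "N - 1 = 4 * s + 1"
      using assms unfolding N_def s_def by presburger+
    then show ?thesis by (simp only: sparse_bound_4) (simp add: sparse_bound_def)
  qed
  have "j \<le> sparse_bound n \<longleftrightarrow> N \<le> n"
  proof
    assume "j \<le> sparse_bound n"
    show "N \<le> n"
    proof (rule ccontr)
      assume "\<not> N \<le> n"
      then have "sparse_bound n \<le> sparse_bound (N - 1)" by (intro monoD[OF mono_sparse_bound]) simp
      with threshold \<open>j \<le> sparse_bound n\<close> show False by simp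
    qed
  next
    assume "N \<le> n"
    then have "sparse_bound N \<le> sparse_bound n" by (rule monoD[OF mono_sparse_bound])
    with threshold show "j \<le> sparse_bound n" by simp
  qed
  then show ?thesis unfolding N_def .
qed

section \<open>Connectivity and nonseparable sets\<close>

lemma simple_graphD:
  assumes "simple_graph V E"
  shows "finite V" "symp E" "irreflp E"
  using assms unfolding simple_graph_def symp_on_def irreflp_on_def by auto

abbreviation induced_edge :: "('a \<Rightarrow> 'a \<Rightarrow> bool) \<Rightarrow> 'a set \<Rightarrow> 'a \<Rightarrow> 'a \<Rightarrow> bool" where
  "induced_edge E S \<equiv> \<lambda>x y. E x y \<and> x \<in> S \<and> y \<in> S"

lemma induced_edge_rtranclp_mono:
  assumes "(induced_edge E S)\<^sup>*\<^sup>* u v" and "S \<subseteq> S'"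
  shows "(induced_edge E S')\<^sup>*\<^sup>* u v"
  using assms by (induction rule: rtranclp_induct) (auto intro: rtranclp.rtrancl_into_rtrancl)

lemma connected_in_Un:
  assumes A: "connected_in E A" and B: "connected_in E B" and "c \<in> A" "c \<in> B"
  shows "connected_in E (A \<union> B)"
proof -
  have via_c: "(induced_edge E (A \<union> B))\<^sup>*\<^sup>* u c \<and> (induced_edge E (A \<union> B))\<^sup>*\<^sup>* c u"
    if "u \<in> A \<union> B" for u
  proof (cases "u \<in> A")
    case True
    then have "(induced_edge E A)\<^sup>*\<^sup>* u c" "(induced_edge E A)\<^sup>*\<^sup>* c u"
      using A \<open>c \<in> A\<close> unfolding connected_in_def by blast+
    then show ?thesis using induced_edge_rtranclp_mono[of E A _ _ "A \<union> B"] by blast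
  next
    case False
    then have "(induced_edge E B)\<^sup>*\<^sup>* u c" "(induced_edge E B)\<^sup>*\<^sup>* c u"
      using that B \<open>c \<in> B\<close> unfolding connected_in_def by blast+
    then show ?thesis using induced_edge_rtranclp_mono[of E B _ _ "A \<union> B"] by blast
  qed
  show ?thesis
    unfolding connected_in_def
  proof (intro conjI ballI)
    show "A \<union> B \<noteq> {}" using \<open>c \<in> A\<close> by blast
  next
    fix u v assume "u \<in> A \<union> B" "v \<in> A \<union> B"
    then show "(induced_edge E (A \<union> B))\<^sup>*\<^sup>* u v" using via_c by (meson rtranclp_trans)
  qed
qed

lemma connected_in_Diff_singleton:
  assumes "nonseparable E C" and "c \<in> C - {v}"
  shows "connected_in E (C - {v})"
  using assms unfolding nonseparable_def by (cases "v \<in> C") auto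

lemma nonseparable_Un:
  assumes A: "nonseparable E A" and B: "nonseparable E B"
    and "a \<in> A" "a \<in> B" "b \<in> A" "b \<in> B" "a \<noteq> b"
  shows "nonseparable E (A \<union> B)"
proof -
  have "connected_in E (A \<union> B - {v})" for v
  proof -
    obtain c where c: "c \<in> A - {v}" "c \<in> B - {v}"
      using assms(3-7) by (cases "v = a") blast+
    have "connected_in E (A - {v} \<union> (B - {v}))"
      using connected_in_Un[OF connected_in_Diff_singleton[OF A c(1)]
          connected_in_Diff_singleton[OF B c(2)] c] .
    then show ?thesis by (simp add: Un_Diff)
  qed
  moreover have "connected_in E A" "connected_in E B"
    using A B unfolding nonseparable_def by simp_all
  then have "connected_in E (A \<union> B)" by (rule connected_in_Un) fact+
  ultimately show ?thesis unfolding nonseparable_def by simp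
qed

lemma connected_in_if_reachable_from:
  assumes "symp E" and "c \<in> S" and reach: "\<And>u. u \<in> S \<Longrightarrow> (induced_edge E S)\<^sup>*\<^sup>* c u"
  shows "connected_in E S"
  unfolding connected_in_def
proof (intro conjI ballI)
  show "S \<noteq> {}" using \<open>c \<in> S\<close> by blast
next
  have "symp (induced_edge E S)\<^sup>*\<^sup>*"
    using \<open>symp E\<close> by (intro symp_rtranclp sympI) (auto dest: sympD)
  fix u v assume "u \<in> S" "v \<in> S"
  have "(induced_edge E S)\<^sup>*\<^sup>* u c"
    using sympD[OF \<open>symp (induced_edge E S)\<^sup>*\<^sup>*\<close> reach[OF \<open>u \<in> S\<close>]] .
  then show "(induced_edge E S)\<^sup>*\<^sup>* u v"
    using reach[OF \<open>v \<in> S\<close>] by (rule rtranclp_trans)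
qed

lemma successively_rtranclp_nth:
  assumes "successively E xs" and "k < length xs"
  shows "(induced_edge E (set xs))\<^sup>*\<^sup>* (xs ! 0) (xs ! k)"
  using assms(2)
proof (induction k)
  case (Suc k)
  have "induced_edge E (set xs) (xs ! k) (xs ! Suc k)"
    using successively_nth[OF assms(1) Suc.prems] Suc.prems by simp
  with Suc.IH[OF Suc_lessD[OF Suc.prems]] show ?case by (rule rtranclp.rtrancl_into_rtrancl)
qed simp

lemma connected_in_successively:
  assumes "symp E" and "successively E xs" and "xs \<noteq> []"
  shows "connected_in E (set xs)"
proof (rule connected_in_if_reachable_from[OF \<open>symp E\<close>])
  show "xs ! 0 \<in> set xs" using \<open>xs \<noteq> []\<close> by simp
  show "(induced_edge E (set xs))\<^sup>*\<^sup>* (xs ! 0) u" if "u \<in> set xs" for u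
    using that successively_rtranclp_nth[OF assms(2)] by (auto simp: in_set_conv_nth)
qed

lemma nonseparable_cycle:
  assumes "symp E" and "successively E xs" and "distinct xs" and "xs \<noteq> []"
    and "E (last xs) (hd xs)"
  shows "nonseparable E (set xs)"
  unfolding nonseparable_def
proof (intro conjI ballI impI)
  show "connected_in E (set xs)" using assms connected_in_successively by blast
next
  fix v assume "v \<in> set xs" and nonempty: "set xs - {v} \<noteq> {}"
  then obtain ys zs where xs: "xs = ys @ v # zs" by (meson split_list)
  have "set xs - {v} = set (zs @ ys)" using \<open>distinct xs\<close> xs by auto
  moreover have "successively E (zs @ ys)"
    using assms(2,5) unfolding xs
    by (auto simp: successively_append_iff successively_Cons hd_append split: if_splits)
  moreover have "zs @ ys \<noteq> []" using nonempty calculation(1) by auto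
  ultimately show "connected_in E (set xs - {v})"
    using connected_in_successively[OF \<open>symp E\<close>] by metis
qed

lemma nonseparable_segment:
  assumes "symp E" and "successively E P" and "distinct P"
    and "k \<le> l" and "l < length P" and "E (P ! l) (P ! k)"
  shows "nonseparable E ((!) P ` {k..l})"
proof -
  define xs where "xs = map ((!) P) [k..<Suc l]"
  have walk: "successively E xs"
    using successively_nth[OF assms(2)] assms(5)
    unfolding xs_def successively_conv_nth by (simp del: upt_Suc)
  have "distinct xs"
    using assms(3,5) unfolding xs_def by (simp add: distinct_map inj_on_def nth_eq_iff_index_eq)
  moreover have "xs \<noteq> []" "hd xs = P ! k" "last xs = P ! l"
    using assms(4) unfolding xs_def by (simp_all add: hd_map last_map del: upt_Suc)
  moreover have "set xs = (!) P ` {k..l}"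
    unfolding xs_def by auto
  ultimately show ?thesis
    using nonseparable_cycle[OF assms(1) walk] assms(6) by simp
qed

lemma deg_in_mono: "finite T \<Longrightarrow> S \<subseteq> T \<Longrightarrow> deg_in E S x \<le> deg_in E T x"
  unfolding deg_in_def by (rule card_mono) auto

text \<open>Unlike \<^const>\<open>cactus\<close>, whose blocks are taken relative to the whole vertex set, this
  condition passes to induced subgraphs, which the induction for the upper bound needs.\<close>

definition weak_cactus :: "('a \<Rightarrow> 'a \<Rightarrow> bool) \<Rightarrow> 'a set \<Rightarrow> bool" where
  "weak_cactus E V \<longleftrightarrow>
     (\<forall>S \<subseteq> V. nonseparable E S \<longrightarrow> 3 \<le> card S \<longrightarrow> (\<forall>x\<in>S. deg_in E S x \<le> 2))"

lemma weak_cactus_subset: "weak_cactus E V \<Longrightarrow> V' \<subseteq> V \<Longrightarrow> weak_cactus E V'"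
  unfolding weak_cactus_def by blast

lemma weak_cactusD:
  "weak_cactus E V \<Longrightarrow> S \<subseteq> V \<Longrightarrow> nonseparable E S \<Longrightarrow> 3 \<le> card S \<Longrightarrow> x \<in> S \<Longrightarrow>
    deg_in E S x \<le> 2"
  unfolding weak_cactus_def by blast

lemma weak_cactus_third_neighbour:
  assumes "weak_cactus E V" and "finite V" and "C \<subseteq> V" and "nonseparable E C" and "x \<in> C"
    and "p \<in> C" "q \<in> C" "r \<in> C" "p \<noteq> q" and "E x p" "E x q" "E x r"
  shows "r = p \<or> r = q"
proof (rule ccontr)
  assume "\<not> ?thesis"
  then have three: "card {p, q, r} = 3" using \<open>p \<noteq> q\<close> by auto
  have "finite C" using assms(2,3) by (rule finite_subset[rotated])
  have "card {p, q, r} \<le> deg_in E C x"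
    unfolding deg_in_def using \<open>finite C\<close> assms(6-12) by (intro card_mono) auto
  moreover have "card {p, q, r} \<le> card C"
    using \<open>finite C\<close> assms(6-8) by (intro card_mono) auto
  ultimately show False
    using weak_cactusD[OF assms(1,3,4) _ assms(5)] three by simp
qed

lemma nonseparable_subset_block:
  assumes "finite V" and "S \<subseteq> V" and "nonseparable E S"
  shows "\<exists>B. is_block V E B \<and> S \<subseteq> B"
proof -
  let ?F = "{B. S \<subseteq> B \<and> B \<subseteq> V \<and> nonseparable E B}"
  have "?F \<subseteq> Pow V" by blast
  then have "finite ?F" using assms(1) by (simp add: finite_subset)
  moreover have "S \<in> ?F" using assms(2,3) by simp
  ultimately obtain B where B: "B \<in> ?F" and maximal: "\<forall>B'\<in>?F. B \<le> B' \<longrightarrow> B = B'"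
    using finite_has_maximal[of ?F] by blast
  have "is_block V E B"
    unfolding is_block_def
  proof (intro conjI allI impI notI)
    fix B' assume "B \<subset> B' \<and> B' \<subseteq> V" and "nonseparable E B'"
    then have "B' \<in> ?F" using B by auto
    then show False using maximal \<open>B \<subset> B' \<and> B' \<subseteq> V\<close> by auto
  qed (use B in auto)
  then show ?thesis using B by blast
qed

lemma cactus_imp_weak_cactus:
  assumes "cactus V E"
  shows "weak_cactus E V"
  unfolding weak_cactus_def
proof (intro allI impI ballI)
  fix S x assume "S \<subseteq> V" "nonseparable E S" "3 \<le> card S" "x \<in> S"
  have "finite V" using assms unfolding cactus_def simple_graph_def by simp
  then obtain B where B: "is_block V E B" "S \<subseteq> B"
    using nonseparable_subset_block \<open>S \<subseteq> V\<close> \<open>nonseparable E S\<close> by blast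
  have "finite B" using B(1) \<open>finite V\<close> finite_subset unfolding is_block_def by blast
  then have "3 \<le> card B" using card_mono[OF _ B(2)] \<open>3 \<le> card S\<close> by simp
  moreover have "card B \<le> 2 \<or> (\<forall>y\<in>B. deg_in E B y = 2)"
    using assms B(1) unfolding cactus_def by blast
  ultimately have "deg_in E B x = 2" using B(2) \<open>x \<in> S\<close> by auto
  then show "deg_in E S x \<le> 2" using deg_in_mono[OF \<open>finite B\<close> B(2), of E x] by simp
qed

lemma nonseparable_deg_ge_2:
  assumes "irreflp E" and "finite B" and "nonseparable E B" and "3 \<le> card B" and "x \<in> B"
  shows "2 \<le> deg_in E B x"
proof (rule ccontr)
  assume "\<not> 2 \<le> deg_in E B x"
  then have le1: "card {y \<in> B. E x y} \<le> Suc 0" unfolding deg_in_def by simp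
  have big: "\<not> B \<subseteq> {x, y}" for y
  proof
    assume "B \<subseteq> {x, y}"
    then have "card B \<le> card {x, y}" by (intro card_mono) auto
    also have "\<dots> \<le> 2" by (simp add: card_insert_if)
    finally show False using \<open>3 \<le> card B\<close> by simp
  qed
  obtain y where nbrs: "{y \<in> B. E x y} \<subseteq> {y}" and "y \<noteq> x"
  proof (cases "\<exists>y\<in>B. E x y")
    case True
    then obtain y where "y \<in> B" "E x y" by blast
    moreover have "finite {y \<in> B. E x y}" using assms(2) by simp
    ultimately have "{y \<in> B. E x y} \<subseteq> {y}" using le1 card_le_Suc0_iff_eq by blast
    moreover have "y \<noteq> x" using \<open>E x y\<close> assms(1) by (auto dest: irreflpD)
    ultimately show ?thesis by (rule that)
  next
    case False
    obtain y where "y \<in> B" "y \<noteq> x" using big[of x] by blast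
    with False show ?thesis using that by blast
  qed
  obtain z where z: "z \<in> B" "z \<noteq> x" "z \<noteq> y" using big[of y] by blast
  have "(induced_edge E (B - {y}))\<^sup>*\<^sup>* x z"
    using connected_in_Diff_singleton[OF assms(3), of x y] z assms(5) \<open>y \<noteq> x\<close>
    unfolding connected_in_def by blast
  then show False
  proof (cases rule: converse_rtranclpE)
    case base
    then show False using z by simp
  next
    case (step w)
    then show False using nbrs by auto
  qed
qed

lemma cactus_if_deg_le_2:
  assumes "simple_graph V E" and "\<And>x. x \<in> V \<Longrightarrow> deg_in E V x \<le> 2"
  shows "cactus V E"
  unfolding cactus_def
proof (intro conjI allI impI)
  fix B assume "is_block V E B"
  then have "B \<subseteq> V" "nonseparable E B" unfolding is_block_def by auto
  have "finite B" using simple_graphD(1)[OF assms(1)] \<open>B \<subseteq> V\<close> finite_subset by blast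
  have "deg_in E B x = 2" if "3 \<le> card B" "x \<in> B" for x
  proof -
    have "2 \<le> deg_in E B x"
      using nonseparable_deg_ge_2[OF simple_graphD(3)[OF assms(1)] \<open>finite B\<close> \<open>nonseparable E B\<close> that] .
    moreover have "deg_in E B x \<le> deg_in E V x"
      using deg_in_mono[OF simple_graphD(1)[OF assms(1)] \<open>B \<subseteq> V\<close>] .
    moreover have "deg_in E V x \<le> 2" using assms(2) \<open>B \<subseteq> V\<close> that(2) by blast
    ultimately show ?thesis by simp
  qed
  then show "card B \<le> 2 \<or> 3 \<le> card B \<and> (\<forall>x\<in>B. deg_in E B x = 2)" by auto
qed (rule assms(1))

section \<open>A reducible set via a longest path\<close>

definition closed_nbhd :: "('a \<Rightarrow> 'a \<Rightarrow> bool) \<Rightarrow> 'a set \<Rightarrow> 'a set \<Rightarrow> 'a set" where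
  "closed_nbhd E V T = T \<union> {y \<in> V. \<exists>t\<in>T. E t y}"

definition reducible_set :: "('a \<Rightarrow> 'a \<Rightarrow> bool) \<Rightarrow> 'a set \<Rightarrow> 'a set \<Rightarrow> bool" where
  "reducible_set E V T \<longleftrightarrow> T \<subseteq> V \<and> T \<noteq> {} \<and> card T \<le> 2 \<and>
     sparse_bound (card (closed_nbhd E V T)) \<le> card T"

lemma reducible_pair:
  assumes "closed_nbhd E V {u, w} \<subseteq> {u, w, a, b}" and "u \<in> V" "w \<in> V" "u \<noteq> w"
  shows "reducible_set E V {u, w}"
proof -
  have "card (closed_nbhd E V {u, w}) \<le> card {u, w, a, b}"
    using assms(1) by (rule card_mono[rotated]) simp
  also have "\<dots> \<le> 4" by (simp add: card_insert_if)
  finally have "sparse_bound (card (closed_nbhd E V {u, w})) \<le> 2" by (rule sparse_bound_le_2)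
  then show ?thesis
    using assms(2-4) unfolding reducible_set_def by simp
qed

definition is_path :: "('a \<Rightarrow> 'a \<Rightarrow> bool) \<Rightarrow> 'a set \<Rightarrow> 'a list \<Rightarrow> bool" where
  "is_path E V xs \<longleftrightarrow> successively E xs \<and> distinct xs \<and> set xs \<subseteq> V"

definition is_longest_path :: "('a \<Rightarrow> 'a \<Rightarrow> bool) \<Rightarrow> 'a set \<Rightarrow> 'a list \<Rightarrow> bool" where
  "is_longest_path E V P \<longleftrightarrow> is_path E V P \<and> (\<forall>Q. is_path E V Q \<longrightarrow> length Q \<le> length P)"

lemma longest_path_exists:
  assumes "finite V" and "v \<in> V"
  shows "\<exists>P. is_longest_path E V P \<and> P \<noteq> []"
proof -
  have "is_path E V [v]" using assms(2) by (simp add: is_path_def)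
  moreover have "\<forall>xs. is_path E V xs \<longrightarrow> length xs < Suc (card V)"
    using assms(1) by (auto simp: is_path_def less_Suc_eq_le simp flip: distinct_card intro: card_mono)
  ultimately obtain P where P: "is_path E V P" "\<forall>Q. is_path E V Q \<longrightarrow> length Q \<le> length P"
    using ex_has_greatest_nat[of "is_path E V" "[v]" length] by blast
  moreover have "P \<noteq> []" using P(2) \<open>is_path E V [v]\<close> by fastforce
  ultimately show ?thesis unfolding is_longest_path_def by blast
qed

lemma longest_path_hd_neighbour:
  assumes "symp E" and "is_longest_path E V (x # xs)" and "y \<in> V" and "E x y"
  shows "y \<in> set (x # xs)"
proof (rule ccontr)
  assume "y \<notin> set (x # xs)"
  then have "is_path E V (y # x # xs)"
    using assms unfolding is_longest_path_def is_path_def by (auto dest: sympD)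
  then show False using assms(2) unfolding is_longest_path_def by fastforce
qed

lemma longest_path_last_neighbour:
  assumes "is_longest_path E V (xs @ [x])" and "y \<in> V" and "E x y"
  shows "y \<in> set (xs @ [x])"
proof (rule ccontr)
  assume "y \<notin> set (xs @ [x])"
  then have "is_path E V ((xs @ [x]) @ [y])"
    using assms unfolding is_longest_path_def is_path_def by (auto simp: successively_append_iff)
  then show False using assms(1) unfolding is_longest_path_def by fastforce
qed

lemma longest_path_replace_hd:
  assumes "symp E" and "is_longest_path E V (x # xs)" and "xs \<noteq> []"
    and "w \<in> V" and "w \<notin> set xs" and "E (hd xs) w"
  shows "is_longest_path E V (w # xs)"
  using assms unfolding is_longest_path_def is_path_def by (auto simp: successively_Cons dest: sympD)

text \<open>Neighbours of \<open>P ! 1\<close> other than \<open>P ! 0\<close> and \<open>P ! 2\<close> that have a further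
  neighbour lie on a cycle through the edge from \<open>P ! 1\<close> to \<open>P ! 2\<close>. Two such cycles, or
  one together with a cycle through \<open>P ! 0\<close>, \<open>P ! 1\<close>, \<open>P ! 2\<close>, would give \<open>P ! 1\<close>
  three neighbours in one nonseparable set.\<close>

locale longest_path_in_weak_cactus =
  fixes E :: "'a \<Rightarrow> 'a \<Rightarrow> bool" and V :: "'a set" and P :: "'a list"
  assumes finite_V: "finite V" and sym: "symp E" and irrefl: "irreflp E"
    and weak_cactus: "weak_cactus E V"
    and longest: "is_longest_path E V P" and length_P: "3 \<le> length P"
begin

lemma path: "successively E P" "distinct P" "set P \<subseteq> V"
  using longest unfolding is_longest_path_def is_path_def by auto

lemma nth_in_V: "i < length P \<Longrightarrow> P ! i \<in> V"
  using path(3) nth_mem by blast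

lemma nth_eq_iff: "i < length P \<Longrightarrow> k < length P \<Longrightarrow> P ! i = P ! k \<longleftrightarrow> i = k"
  using path(2) by (simp add: nth_eq_iff_index_eq)

lemma edges: "E (P ! 0) (P ! 1)" "E (P ! 1) (P ! 2)"
  using successively_nth[OF path(1), of 0] successively_nth[OF path(1), of 1] length_P
  by (simp_all add: numeral_2_eq_2)

lemma P_not_Nil: "P \<noteq> []"
  using length_P by (cases P) auto

lemma P012_in_V: "P ! 0 \<in> V" "P ! 1 \<in> V" "P ! 2 \<in> V"
  using nth_in_V[of 0] nth_in_V[of 1] nth_in_V[of 2] length_P P_not_Nil by simp_all

lemma distinct_012: "P ! 0 \<noteq> P ! 1" "P ! 0 \<noteq> P ! 2" "P ! 1 \<noteq> P ! 2"
proof -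
  have "0 < length P" "1 < length P" "2 < length P" using length_P by linarith+
  then show "P ! 0 \<noteq> P ! 1" "P ! 0 \<noteq> P ! 2" "P ! 1 \<noteq> P ! 2"
    using nth_eq_iff by simp_all
qed

lemma segment:
  assumes "k \<le> l" and "l < length P" and "E (P ! k) (P ! l)"
  shows "nonseparable E ((!) P ` {k..l})" and "(!) P ` {k..l} \<subseteq> V"
  using nonseparable_segment[OF sym path(1,2) assms(1,2)] assms(2,3) sym nth_in_V
  by (auto dest: sympD)

definition other_neighbours :: "'a set" where
  "other_neighbours = {w \<in> V. E (P ! 1) w \<and> w \<noteq> P ! 0 \<and> w \<noteq> P ! 2}"

lemma end_neighbours_cases:
  obtains "\<And>y. y \<in> V \<Longrightarrow> E (P ! 0) y \<Longrightarrow> y = P ! 1"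
  | C b where "C \<subseteq> V" "nonseparable E C" "{P ! 0, P ! 1, P ! 2} \<subseteq> C"
      "\<And>y. y \<in> V \<Longrightarrow> E (P ! 0) y \<Longrightarrow> y \<in> {P ! 1, b}"
proof -
  define I where "I = {i. i < length P \<and> E (P ! 0) (P ! i)}"
  have "finite I" unfolding I_def by simp
  have "0 \<notin> I" using irrefl unfolding I_def by (auto dest: irreflpD)
  have nbr_index: "\<exists>i\<in>I. y = P ! i" if y: "y \<in> V" "E (P ! 0) y" for y
  proof -
    obtain x xs where "P = x # xs" using P_not_Nil by (cases P) auto
    then have "y \<in> set P" using longest_path_hd_neighbour[OF sym, of V x xs y] longest y by simp
    then show ?thesis using y(2) unfolding I_def by (auto simp: in_set_conv_nth)
  qed
  show ?thesis
  proof (cases "I \<subseteq> {1}")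
    case True
    have "y = P ! 1" if "y \<in> V" "E (P ! 0) y" for y
      using nbr_index[OF that] True by auto
    then show ?thesis by (rule that(1))
  next
    case False
    then obtain i where "i \<in> I" "i \<noteq> 1" by blast
    then have "2 \<le> i" using \<open>0 \<notin> I\<close> by (cases i) auto
    define a where "a = Max I"
    have "a \<in> I" unfolding a_def using \<open>finite I\<close> \<open>i \<in> I\<close> Max_in by blast
    have below: "j \<le> a" if "j \<in> I" for j unfolding a_def using \<open>finite I\<close> that Max_ge by blast
    have "2 \<le> a" using below[OF \<open>i \<in> I\<close>] \<open>2 \<le> i\<close> by simp
    have "a < length P" "E (P ! 0) (P ! a)" using \<open>a \<in> I\<close> unfolding I_def by auto
    let ?C = "(!) P ` {0..a}"
    have C: "nonseparable E ?C" "?C \<subseteq> V"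
      using segment[of 0 a] \<open>a < length P\<close> \<open>E (P ! 0) (P ! a)\<close> by auto
    have "P ! 1 \<noteq> P ! a" using nth_eq_iff[of 1 a] \<open>2 \<le> a\<close> \<open>a < length P\<close> by simp
    moreover have in_C: "P ! j \<in> ?C" if "j \<le> a" for j using that by (intro imageI) simp
    ultimately have "y \<in> {P ! 1, P ! a}" if y: "y \<in> V" "E (P ! 0) y" for y
    proof -
      obtain j where "j \<in> I" "y = P ! j" using nbr_index[OF y] by blast
      then have "y \<in> ?C" using below in_C by simp
      then show ?thesis
        using weak_cactus_third_neighbour[OF weak_cactus finite_V C(2) C(1), of "P ! 0" "P ! 1" "P ! a" y]
          in_C[of 0] in_C[of 1] in_C[of a] \<open>2 \<le> a\<close> \<open>P ! 1 \<noteq> P ! a\<close> edges(1) \<open>E (P ! 0) (P ! a)\<close> y(2)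
        by simp
    qed
    moreover have "{P ! 0, P ! 1, P ! 2} \<subseteq> ?C" using in_C[of 0] in_C[of 1] in_C[of 2] \<open>2 \<le> a\<close> by simp
    ultimately show ?thesis using that(2) C by blast
  qed
qed

lemma nonseparable_through_neighbour_on_path:
  assumes "w \<in> other_neighbours" and "w \<in> set P"
  shows "\<exists>C \<subseteq> V. nonseparable E C \<and> {P ! 1, P ! 2, w} \<subseteq> C"
proof -
  obtain j where j: "j < length P" "w = P ! j" using assms(2) by (auto simp: in_set_conv_nth)
  have "E (P ! 1) (P ! j)" "P ! j \<noteq> P ! 0"
    using assms(1) j unfolding other_neighbours_def by simp_all
  have "2 \<le> j"
  proof (rule ccontr)
    assume "\<not> 2 \<le> j"
    then have "j = 0 \<or> j = 1" by auto
    then show False using \<open>E (P ! 1) (P ! j)\<close> \<open>P ! j \<noteq> P ! 0\<close> irrefl by (auto dest: irreflpD)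
  qed
  then show ?thesis
    using segment[of 1 j] j \<open>E (P ! 1) (P ! j)\<close>
    by (intro exI[of _ "(!) P ` {1..j}"]) (auto intro!: imageI)
qed

text \<open>Replacing \<open>P ! 0\<close> by \<open>w\<close> gives another longest path, which must contain \<open>y\<close>.\<close>

lemma nonseparable_through_neighbour_off_path:
  assumes "w \<in> other_neighbours" and "w \<notin> set P" and "y \<in> V" and "E w y" and "y \<noteq> P ! 1"
  shows "\<exists>C \<subseteq> V. nonseparable E C \<and> {P ! 1, P ! 2, w} \<subseteq> C"
proof -
  obtain x xs where P: "P = x # xs" using length_P by (cases P) auto
  then have "xs \<noteq> []" using length_P by auto
  then have "hd xs = P ! 1" using P by (simp add: hd_conv_nth)
  let ?Q = "P[0 := w]"
  have "is_longest_path E V ?Q"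
    using longest_path_replace_hd[OF sym, of V x xs w] longest assms(1,2) \<open>xs \<noteq> []\<close>
      \<open>hd xs = P ! 1\<close> P sym unfolding other_neighbours_def by (auto dest: sympD)
  then have Q: "successively E ?Q" "distinct ?Q" "set ?Q \<subseteq> V" "y \<in> set ?Q"
    using longest_path_hd_neighbour[OF sym _ assms(3,4)] P
    unfolding is_longest_path_def is_path_def by auto
  have "?Q ! 0 = w" using P by simp
  obtain k where k: "k < length P" "y = ?Q ! k" using Q(4) unfolding in_set_conv_nth by auto
  have "2 \<le> k"
  proof (rule ccontr)
    assume "\<not> 2 \<le> k"
    then have "k = 0 \<or> k = 1" by auto
    then show False using k assms(4,5) \<open>?Q ! 0 = w\<close> irrefl by (auto dest: irreflpD)
  qed
  have in_segment: "?Q ! i \<in> (!) ?Q ` {0..k}" if "i \<le> k" for i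
    using that by (intro imageI) simp
  have "nonseparable E ((!) ?Q ` {0..k})"
    using nonseparable_segment[OF sym Q(1,2), of 0 k] k sympD[OF sym assms(4)] \<open>?Q ! 0 = w\<close>
    by simp
  moreover have "(!) ?Q ` {0..k} \<subseteq> V"
    using Q(3) k(1) by (auto intro!: nth_mem[THEN subsetD[OF Q(3)]])
  moreover have "{P ! 1, P ! 2, w} \<subseteq> (!) ?Q ` {0..k}"
    using in_segment[of 0] in_segment[of 1] in_segment[of 2] \<open>2 \<le> k\<close> \<open>?Q ! 0 = w\<close> by simp
  ultimately show ?thesis by (intro exI[of _ "(!) ?Q ` {0..k}"]) simp
qed

definition attached_neighbours :: "'a set" where
  "attached_neighbours = {w \<in> other_neighbours. \<exists>y\<in>V. E w y \<and> y \<noteq> P ! 1}"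

lemma attached_neighbourE:
  assumes "w \<in> attached_neighbours"
  obtains C where "C \<subseteq> V" "nonseparable E C" "{P ! 1, P ! 2, w} \<subseteq> C"
proof -
  from assms obtain y where y: "w \<in> other_neighbours" "y \<in> V" "E w y" "y \<noteq> P ! 1"
    unfolding attached_neighbours_def by blast
  have "\<exists>C \<subseteq> V. nonseparable E C \<and> {P ! 1, P ! 2, w} \<subseteq> C"
  proof (cases "w \<in> set P")
    case True
    then show ?thesis using nonseparable_through_neighbour_on_path[OF y(1)] by simp
  next
    case False
    then show ?thesis using nonseparable_through_neighbour_off_path[OF y(1) _ y(2-4)] by simp
  qed
  then show thesis using that by blast
qed

lemma attached_neighbour_props:
  "w \<in> attached_neighbours \<Longrightarrow> E (P ! 1) w \<and> w \<noteq> P ! 0 \<and> w \<noteq> P ! 2"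
  unfolding attached_neighbours_def other_neighbours_def by blast

lemma attached_neighbours_subset_singleton: "\<exists>w0. attached_neighbours \<subseteq> {w0}"
proof -
  have "w = w'" if w: "w \<in> attached_neighbours" "w' \<in> attached_neighbours" for w w'
  proof (rule ccontr)
    assume "w \<noteq> w'"
    obtain C where C: "C \<subseteq> V" "nonseparable E C" "{P ! 1, P ! 2, w} \<subseteq> C"
      using w(1) by (rule attached_neighbourE)
    obtain C' where C': "C' \<subseteq> V" "nonseparable E C'" "{P ! 1, P ! 2, w'} \<subseteq> C'"
      using w(2) by (rule attached_neighbourE)
    have "nonseparable E (C \<union> C')"
      using nonseparable_Un[OF C(2) C'(2), of "P ! 1" "P ! 2"] C(3) C'(3) distinct_012(3) by simp
    moreover have "C \<union> C' \<subseteq> V" using C(1) C'(1) by simp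
    ultimately have "P ! 2 = w \<or> P ! 2 = w'"
      using weak_cactus_third_neighbour[OF weak_cactus finite_V, of "C \<union> C'" "P ! 1" w w' "P ! 2"]
        C(3) C'(3) \<open>w \<noteq> w'\<close> edges(2) attached_neighbour_props[OF w(1)]
        attached_neighbour_props[OF w(2)]
      by simp
    then show False
      using attached_neighbour_props[OF w(1)] attached_neighbour_props[OF w(2)] by auto
  qed
  show ?thesis
  proof (cases "attached_neighbours = {}")
    case False
    then obtain w where "w \<in> attached_neighbours" by blast
    with \<open>\<And>w w'. _ \<Longrightarrow> _ \<Longrightarrow> w = w'\<close> show ?thesis by blast
  qed simp
qed

lemma no_attached_neighbour_if_cycle_through_end:
  assumes "C \<subseteq> V" and "nonseparable E C" and "{P ! 0, P ! 1, P ! 2} \<subseteq> C"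
  shows "attached_neighbours = {}"
proof (rule ccontr)
  assume "attached_neighbours \<noteq> {}"
  then obtain w where w: "w \<in> attached_neighbours" by blast
  obtain C' where C': "C' \<subseteq> V" "nonseparable E C'" "{P ! 1, P ! 2, w} \<subseteq> C'"
    using w by (rule attached_neighbourE)
  have "nonseparable E (C \<union> C')"
    using nonseparable_Un[OF assms(2) C'(2), of "P ! 1" "P ! 2"] assms(3) C'(3) distinct_012(3)
    by simp
  moreover have "C \<union> C' \<subseteq> V" using assms(1) C'(1) by simp
  ultimately have "w = P ! 0 \<or> w = P ! 2"
    using weak_cactus_third_neighbour[OF weak_cactus finite_V, of "C \<union> C'" "P ! 1" "P ! 0" "P ! 2" w]
      assms(3) C'(3) edges sympD[OF sym edges(1)] distinct_012(2) attached_neighbour_props[OF w]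
    by simp
  then show False using attached_neighbour_props[OF w] by simp
qed

lemma neighbours_of_P1: "y \<in> V \<Longrightarrow> E (P ! 1) y \<Longrightarrow> y \<in> {P ! 0, P ! 2} \<union> other_neighbours"
  unfolding other_neighbours_def by auto

lemma reducible_if_end_pendant:
  assumes end_pendant: "\<And>y. y \<in> V \<Longrightarrow> E (P ! 0) y \<Longrightarrow> y = P ! 1"
  shows "\<exists>T. reducible_set E V T"
proof (cases "other_neighbours \<subseteq> attached_neighbours")
  case True
  obtain w0 where "other_neighbours \<subseteq> {w0}"
    using True attached_neighbours_subset_singleton by blast
  then have "closed_nbhd E V {P ! 0, P ! 1} \<subseteq> {P ! 0, P ! 1, P ! 2, w0}"
    using end_pendant neighbours_of_P1 unfolding closed_nbhd_def by blast
  then have "reducible_set E V {P ! 0, P ! 1}"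
    by (rule reducible_pair[OF _ P012_in_V(1,2) distinct_012(1)])
  then show ?thesis ..
next
  case False
  then obtain w where w: "w \<in> other_neighbours"
    and pendant: "\<And>y. y \<in> V \<Longrightarrow> E w y \<Longrightarrow> y = P ! 1"
    unfolding attached_neighbours_def by blast
  have "closed_nbhd E V {P ! 0, w} \<subseteq> {P ! 0, w, P ! 1, P ! 1}"
    using end_pendant pendant unfolding closed_nbhd_def by blast
  then have "reducible_set E V {P ! 0, w}"
    by (rule reducible_pair[OF _ P012_in_V(1)]) (use w in \<open>auto simp: other_neighbours_def\<close>)
  then show ?thesis ..
qed

lemma reducible_if_cycle_through_end:
  assumes "C \<subseteq> V" and "nonseparable E C" and "{P ! 0, P ! 1, P ! 2} \<subseteq> C"
    and end_nbrs: "\<And>y. y \<in> V \<Longrightarrow> E (P ! 0) y \<Longrightarrow> y \<in> {P ! 1, b}"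
  shows "\<exists>T. reducible_set E V T"
proof -
  have pendant: "y = P ! 1" if "w \<in> other_neighbours" "y \<in> V" "E w y" for w y
    using no_attached_neighbour_if_cycle_through_end[OF assms(1-3)] that
    unfolding attached_neighbours_def by blast
  have in_V: "other_neighbours \<subseteq> V" unfolding other_neighbours_def by blast
  consider w w' where "w \<in> other_neighbours" "w' \<in> other_neighbours" "w \<noteq> w'"
    | "other_neighbours = {}" | w where "other_neighbours = {w}"
    by blast
  then show ?thesis
  proof cases
    case (1 w w')
    then have "closed_nbhd E V {w, w'} \<subseteq> {w, w', P ! 1, P ! 1}"
      using pendant unfolding closed_nbhd_def by blast
    then have "reducible_set E V {w, w'}"
      by (rule reducible_pair) (use 1 in_V in auto)
    then show ?thesis ..
  next
    case 2
    then have "closed_nbhd E V {P ! 0, P ! 1} \<subseteq> {P ! 0, P ! 1, b, P ! 2}"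
      using end_nbrs neighbours_of_P1 unfolding closed_nbhd_def by blast
    then have "reducible_set E V {P ! 0, P ! 1}"
      by (rule reducible_pair[OF _ P012_in_V(1,2) distinct_012(1)])
    then show ?thesis ..
  next
    case (3 w)
    then have "closed_nbhd E V {P ! 1, w} \<subseteq> {P ! 1, w, P ! 0, P ! 2}"
      using pendant neighbours_of_P1 unfolding closed_nbhd_def by blast
    moreover have "P ! 1 \<noteq> w" using 3 irrefl unfolding other_neighbours_def by (auto dest: irreflpD)
    ultimately have "reducible_set E V {P ! 1, w}"
      using reducible_pair[OF _ P012_in_V(2)] 3 in_V by simp
    then show ?thesis ..
  qed
qed

lemma reducible_set_exists: "\<exists>T. reducible_set E V T"
proof (cases rule: end_neighbours_cases)
  case 1
  then show ?thesis by (rule reducible_if_end_pendant)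
next
  case (2 C b)
  then show ?thesis by (rule reducible_if_cycle_through_end)
qed


end

lemma weak_cactus_reducible_set:
  assumes "finite V" and "V \<noteq> {}" and "symp E" and "irreflp E" and "weak_cactus E V"
  shows "\<exists>T. reducible_set E V T"
proof -
  obtain v where "v \<in> V" using assms(2) by blast
  then obtain P where P: "is_longest_path E V P" "P \<noteq> []"
    using longest_path_exists[OF assms(1)] by blast
  then have "distinct P" "set P \<subseteq> V"
    unfolding is_longest_path_def is_path_def by auto
  consider x where "P = [x]" | x y where "P = [x, y]" | "3 \<le> length P"
  proof -
    obtain x xs where P_Cons: "P = x # xs" using P(2) by (cases P) auto
    show thesis
    proof (cases xs)
      case Nil
      then show thesis using that(1) P_Cons by blast
    next
      case (Cons y ys)
      then show thesis using that(2,3) P_Cons by (cases ys) auto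
    qed
  qed
  then show ?thesis
  proof cases
    case (1 x)
    then have "\<not> E x y" if "y \<in> V" for y
      using longest_path_hd_neighbour[OF assms(3), of V x "[]" y] P(1) that assms(4)
      by (auto dest: irreflpD)
    then have "closed_nbhd E V {x} = {x}" unfolding closed_nbhd_def by auto
    then have "reducible_set E V {x}"
      using \<open>set P \<subseteq> V\<close> 1 sparse_bound_1 unfolding reducible_set_def by simp
    then show ?thesis ..
  next
    case (2 x y)
    have "z \<in> {x, y}" if "z \<in> V" "E x z" for z
      using longest_path_hd_neighbour[OF assms(3), of V x "[y]" z] P(1) that 2 by simp
    moreover have "z \<in> {x, y}" if "z \<in> V" "E y z" for z
      using longest_path_last_neighbour[of E V "[x]" y z] P(1) that 2 by simp
    ultimately have "closed_nbhd E V {x, y} \<subseteq> {x, y, x, y}" unfolding closed_nbhd_def by blast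
    then have "reducible_set E V {x, y}"
      by (rule reducible_pair) (use \<open>distinct P\<close> \<open>set P \<subseteq> V\<close> 2 in auto)
    then show ?thesis ..
  next
    case 3
    interpret longest_path_in_weak_cactus E V P
      using assms P(1) 3 by unfold_locales
    show ?thesis by (rule reducible_set_exists)
  qed
qed


section \<open>Large 1-sparse sets in cacti\<close>

lemma deg_in_Un_no_edges:
  assumes "\<And>y. y \<in> B \<Longrightarrow> \<not> E x y"
  shows "deg_in E (A \<union> B) x = deg_in E A x"
  unfolding deg_in_def using assms by (intro arg_cong[where f = card]) auto

lemma deg_in_le_card_minus_1:
  assumes "irreflp E" and "finite T" and "x \<in> T"
  shows "deg_in E T x \<le> card T - 1"
proof -
  have "deg_in E T x \<le> card (T - {x})"
    unfolding deg_in_def using assms by (intro card_mono) (auto dest: irreflpD)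
  then show ?thesis using assms(2,3) by simp
qed

lemma sparse_set_extend:
  assumes "finite V" and "symp E" and "irreflp E" and T: "reducible_set E V T"
    and S': "S' \<subseteq> V - closed_nbhd E V T" "\<forall>x\<in>S'. deg_in E S' x \<le> 1"
      "sparse_bound (card (V - closed_nbhd E V T)) \<le> card S'"
  shows "S' \<union> T \<subseteq> V" and "\<forall>x\<in>S' \<union> T. deg_in E (S' \<union> T) x \<le> 1"
    and "sparse_bound (card V) \<le> card (S' \<union> T)"
proof -
  define X where "X = closed_nbhd E V T"
  have "T \<subseteq> X" "X \<subseteq> V" "finite T" "card T \<le> 2"
    using T assms(1) finite_subset unfolding X_def reducible_set_def closed_nbhd_def by auto
  show "S' \<union> T \<subseteq> V" using S'(1) \<open>T \<subseteq> X\<close> \<open>X \<subseteq> V\<close> unfolding X_def by blast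
  have no_edge: "\<not> E t s" "\<not> E s t" if "t \<in> T" "s \<in> S'" for s t
    using that S'(1) sympD[OF assms(2), of s t] unfolding closed_nbhd_def by auto
  show "\<forall>x\<in>S' \<union> T. deg_in E (S' \<union> T) x \<le> 1"
  proof
    fix x assume "x \<in> S' \<union> T"
    show "deg_in E (S' \<union> T) x \<le> 1"
    proof (cases "x \<in> T")
      case True
      have "deg_in E (S' \<union> T) x = deg_in E T x"
        using deg_in_Un_no_edges[of S' E x T] no_edge(1)[OF True] by (simp add: Un_commute)
      also have "\<dots> \<le> card T - 1" using deg_in_le_card_minus_1[OF assms(3) \<open>finite T\<close> True] .
      finally show ?thesis using \<open>card T \<le> 2\<close> by simp
    next
      case False
      then have "x \<in> S'" using \<open>x \<in> S' \<union> T\<close> by simp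
      then have "deg_in E (S' \<union> T) x = deg_in E S' x"
        using deg_in_Un_no_edges[of T E x S'] no_edge(2) by simp
      then show ?thesis using S'(2) \<open>x \<in> S'\<close> by simp
    qed
  qed
  have "card (V - X) = card V - card X"
    using finite_subset[OF \<open>X \<subseteq> V\<close> assms(1)] \<open>X \<subseteq> V\<close> by (rule card_Diff_subset)
  moreover have "card X \<le> card V" using assms(1) \<open>X \<subseteq> V\<close> by (rule card_mono)
  ultimately have "sparse_bound (card V) \<le> sparse_bound (card (V - X)) + sparse_bound (card X)"
    using sparse_bound_add_le[of "card (V - X)" "card X"] by simp
  also have "\<dots> \<le> card S' + card T"
    using S'(3) T unfolding X_def reducible_set_def by simp
  also have "\<dots> = card (S' \<union> T)"
    using S'(1) \<open>T \<subseteq> X\<close> \<open>finite T\<close> assms(1) unfolding X_def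
    by (subst card_Un_disjoint) (auto intro: finite_subset)
  finally show "sparse_bound (card V) \<le> card (S' \<union> T)" .
qed

lemma weak_cactus_sparse_set:
  assumes "finite V" and "symp E" and "irreflp E" and "weak_cactus E V"
  shows "\<exists>S \<subseteq> V. (\<forall>x\<in>S. deg_in E S x \<le> 1) \<and> sparse_bound (card V) \<le> card S"
  using assms(1,4)
proof (induction "card V" arbitrary: V rule: less_induct)
  case less
  show ?case
  proof (cases "V = {}")
    case True
    then show ?thesis by (simp add: sparse_bound_def)
  next
    case False
    obtain T where T: "reducible_set E V T"
      using weak_cactus_reducible_set[OF less.prems(1) False assms(2,3) less.prems(2)] by blast
    let ?X = "closed_nbhd E V T"
    have "T \<noteq> {}" "T \<subseteq> ?X" "?X \<subseteq> V"
      using T unfolding reducible_set_def closed_nbhd_def by auto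
    then have "card (V - ?X) < card V"
      using less.prems(1) by (intro psubset_card_mono) auto
    moreover have "weak_cactus E (V - ?X)"
      using less.prems(2) by (rule weak_cactus_subset) blast
    ultimately obtain S' where "S' \<subseteq> V - ?X" "\<forall>x\<in>S'. deg_in E S' x \<le> 1"
      "sparse_bound (card (V - ?X)) \<le> card S'"
      using less.hyps[of "V - ?X"] less.prems(1) by auto
    from sparse_set_extend[OF less.prems(1) assms(2,3) T this] show ?thesis by blast
  qed
qed

section \<open>No large 1-dense sets in cacti\<close>

lemma connected_in_if_common_neighbours:
  assumes "S \<noteq> {}"
    and common: "\<And>u v. u \<in> S \<Longrightarrow> v \<in> S \<Longrightarrow> u \<noteq> v \<Longrightarrow> E u v \<or> (\<exists>w\<in>S. E u w \<and> E w v)"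
  shows "connected_in E S"
  unfolding connected_in_def
proof (intro conjI ballI)
  show "S \<noteq> {}" by (rule assms(1))
next
  fix u v assume uv: "u \<in> S" "v \<in> S"
  show "(induced_edge E S)\<^sup>*\<^sup>* u v"
  proof (cases "u = v")
    case False
    then consider "E u v" | w where "w \<in> S" "E u w" "E w v"
      using common[OF uv False] by blast
    then show ?thesis
    proof cases
      case 1
      then show ?thesis using uv by (intro r_into_rtranclp) simp
    next
      case (2 w)
      then have "induced_edge E S u w" "induced_edge E S w v" using uv by simp_all
      then show ?thesis by (rule converse_rtranclp_into_rtranclp[OF _ r_into_rtranclp])
    qed
  qed simp
qed

lemma dense_set_finite: "dense_set E V k i S \<Longrightarrow> 0 < i \<Longrightarrow> finite S"
  unfolding dense_set_def sparse_set_def using card.infinite by fastforce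

lemma dense_set_non_neighbour_unique:
  assumes "dense_set E V 1 i S" and "0 < i" and "x \<in> S"
    and "y \<in> S" "x \<noteq> y" "\<not> E x y" and "z \<in> S" "x \<noteq> z" "\<not> E x z"
  shows "y = z"
proof -
  have "finite S" using dense_set_finite[OF assms(1,2)] .
  have "card {y \<in> S. x \<noteq> y \<and> \<not> E x y} \<le> 1"
    using assms(1,3) unfolding dense_set_def sparse_set_def deg_in_def by blast
  moreover have "finite {y \<in> S. x \<noteq> y \<and> \<not> E x y}" using \<open>finite S\<close> by simp
  ultimately show ?thesis using assms(4-9) card_le_Suc0_iff_eq by fastforce
qed

lemma dense_set_common_neighbour:
  assumes "symp E" and dense: "dense_set E V 1 i S" and "4 \<le> i"
    and "u \<in> S" "v \<in> S" "u \<noteq> v" "\<not> E u v"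
  shows "\<exists>w\<in>S - {z}. E u w \<and> E w v"
proof -
  have "card S = i" using dense unfolding dense_set_def sparse_set_def by simp
  have "\<not> S \<subseteq> {u, v, z}"
  proof
    assume "S \<subseteq> {u, v, z}"
    then have "card S \<le> card {u, v, z}" by (intro card_mono) auto
    also have "\<dots> \<le> 3" by (simp add: card_insert_if)
    finally show False using \<open>card S = i\<close> \<open>4 \<le> i\<close> by simp
  qed
  then obtain w where w: "w \<in> S" "w \<noteq> u" "w \<noteq> v" "w \<noteq> z" by blast
  have "0 < i" using \<open>4 \<le> i\<close> by simp
  have "E u w"
    using dense_set_non_neighbour_unique[OF dense \<open>0 < i\<close> \<open>u \<in> S\<close> \<open>v \<in> S\<close> \<open>u \<noteq> v\<close> \<open>\<not> E u v\<close> w(1)] w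
    by auto
  moreover have "\<not> E v u" using \<open>\<not> E u v\<close> sympD[OF assms(1)] by blast
  then have "E v w"
    using dense_set_non_neighbour_unique[OF dense \<open>0 < i\<close> \<open>v \<in> S\<close> \<open>u \<in> S\<close> _ _ w(1)] \<open>u \<noteq> v\<close> w
    by auto
  ultimately show ?thesis using w sympD[OF assms(1)] by blast
qed

lemma dense_set_nonseparable:
  assumes "symp E" and dense: "dense_set E V 1 i S" and "4 \<le> i"
  shows "nonseparable E S"
proof -
  have "card S = i" using dense unfolding dense_set_def sparse_set_def by simp
  have common: "E u v \<or> (\<exists>w\<in>S - {z}. E u w \<and> E w v)" if "u \<in> S" "v \<in> S" "u \<noteq> v" for u v z
    using dense_set_common_neighbour[OF assms that] by blast
  have "S - {z} \<noteq> {}" for z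
  proof
    assume "S - {z} = {}"
    then have "card S \<le> card {z}" by (intro card_mono) auto
    then show False using \<open>card S = i\<close> \<open>4 \<le> i\<close> by simp
  qed
  then have "connected_in E (S - {z})" for z
    by (rule connected_in_if_common_neighbours) (use common in blast)
  moreover have "connected_in E S"
    using \<open>S - {undefined} \<noteq> {}\<close>
    by (intro connected_in_if_common_neighbours) (use common[where z = undefined] in blast)+
  ultimately show ?thesis unfolding nonseparable_def by blast
qed

lemma dense_set_deg_ge:
  assumes "dense_set E V 1 i S" and "x \<in> S"
  shows "i \<le> deg_in E S x + 2"
proof (cases "finite S")
  case True
  let ?N = "{y \<in> S. E x y}" and ?M = "{y \<in> S. x \<noteq> y \<and> \<not> E x y}"
  have "card S - 1 = card (S - {x})" using True assms(2) by simp
  also have "\<dots> \<le> card (?N \<union> ?M)" using True by (intro card_mono) auto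
  also have "\<dots> \<le> card ?N + card ?M" by (rule card_Un_le)
  also have "\<dots> \<le> deg_in E S x + 1"
    using assms unfolding dense_set_def sparse_set_def deg_in_def by simp
  finally show ?thesis using assms(1) unfolding dense_set_def sparse_set_def by simp
next
  case False
  then show ?thesis using assms(1) unfolding dense_set_def sparse_set_def by simp
qed

lemma weak_cactus_no_dense_set:
  assumes "symp E" and "weak_cactus E V" and "5 \<le> i"
  shows "\<not> dense_set E V 1 i S"
proof
  assume dense: "dense_set E V 1 i S"
  then have "S \<subseteq> V" "card S = i" unfolding dense_set_def sparse_set_def by simp_all
  then obtain x where "x \<in> S" using \<open>5 \<le> i\<close> by fastforce
  have "nonseparable E S" using dense_set_nonseparable[OF assms(1) dense] \<open>5 \<le> i\<close> by simp
  then have "deg_in E S x \<le> 2"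
    using weak_cactusD[OF assms(2) \<open>S \<subseteq> V\<close>] \<open>card S = i\<close> \<open>5 \<le> i\<close> \<open>x \<in> S\<close> by simp
  moreover have "i \<le> deg_in E S x + 2" by (rule dense_set_deg_ge[OF dense \<open>x \<in> S\<close>])
  ultimately show False using \<open>5 \<le> i\<close> by simp
qed


section \<open>Disjoint 4-cycles\<close>

text \<open>The cycles \<open>4q, 4q + 1, 4q + 2, 4q + 3\<close> on \<open>{0..<m}\<close>; the last one is cut short
  unless \<open>4\<close> divides \<open>m\<close>.\<close>

definition four_cycles :: "nat \<Rightarrow> nat \<Rightarrow> nat \<Rightarrow> bool" where
  "four_cycles m x y \<longleftrightarrow> x < m \<and> y < m \<and> x div 4 = y div 4 \<and> odd (x + y)"

lemma simple_graph_four_cycles: "simple_graph {0..<m} (four_cycles m)"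
  unfolding simple_graph_def four_cycles_def by (auto simp: add.commute)

lemma four_cycles_neighbours:
  assumes "four_cycles m x y"
  shows "y \<in> (if even x then {4 * (x div 4) + 1, 4 * (x div 4) + 3}
              else {4 * (x div 4), 4 * (x div 4) + 2})"
proof -
  define r where "r = y mod 4"
  have "y div 4 = x div 4" using assms unfolding four_cycles_def by simp
  then have y: "y = 4 * (x div 4) + r"
    using div_mult_mod_eq[of y 4] unfolding r_def by linarith
  have "r < 4" unfolding r_def by simp
  then have "r = 0 \<or> r = 1 \<or> r = 2 \<or> r = 3" by presburger
  moreover have "odd (x + r)" using assms unfolding four_cycles_def y by simp
  ultimately show ?thesis unfolding y by auto
qed

lemma deg_four_cycles_le_2: "deg_in (four_cycles m) S x \<le> 2"
proof -
  let ?N = "if even x then {4 * (x div 4) + 1, 4 * (x div 4) + 3}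
            else {4 * (x div 4), 4 * (x div 4) + 2}"
  have "{y \<in> S. four_cycles m x y} \<subseteq> ?N" using four_cycles_neighbours[of m x] by blast
  then have "deg_in (four_cycles m) S x \<le> card ?N"
    unfolding deg_in_def by (intro card_mono) auto
  also have "\<dots> \<le> 2" by (simp add: card_insert_if)
  finally show ?thesis .
qed

lemma cactus_four_cycles: "cactus {0..<m} (four_cycles m)"
  by (rule cactus_if_deg_le_2[OF simple_graph_four_cycles deg_four_cycles_le_2])

lemma four_cycles_sparse_block:
  assumes sparse: "\<forall>x\<in>S. deg_in (four_cycles m) S x \<le> 1" and "S \<subseteq> {0..<m}"
  shows "card (S \<inter> {4 * q..<4 * q + 4}) \<le> 2"
proof -
  define Ev Od where "Ev = S \<inter> {4 * q, 4 * q + 2}" and "Od = S \<inter> {4 * q + 1, 4 * q + 3}"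
  have "{4 * q..<4 * q + 4} = {4 * q, 4 * q + 1, 4 * q + 2, 4 * q + 3}" by auto
  then have block: "S \<inter> {4 * q..<4 * q + 4} = Ev \<union> Od" unfolding Ev_def Od_def by auto
  have div_q: "z div 4 = q" if "4 * q \<le> z" "z < 4 * q + 4" for z
    using that by (intro div_nat_eqI) simp_all
  have adjacent: "four_cycles m x y \<and> four_cycles m y x" if "x \<in> Ev" "y \<in> Od" for x y
    using that assms(2) div_q[of x] div_q[of y] unfolding Ev_def Od_def four_cycles_def by auto
  have "finite S" using assms(2) finite_subset by blast
  have Ev_le: "card Ev \<le> 1" if "y \<in> Od" for y
  proof -
    have "card Ev \<le> deg_in (four_cycles m) S y"
      unfolding deg_in_def using adjacent[OF _ that] \<open>finite S\<close>
      by (intro card_mono) (auto simp: Ev_def)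
    then show ?thesis using sparse that unfolding Od_def by fastforce
  qed
  have Od_le: "card Od \<le> 1" if "x \<in> Ev" for x
  proof -
    have "card Od \<le> deg_in (four_cycles m) S x"
      unfolding deg_in_def using adjacent[OF that] \<open>finite S\<close>
      by (intro card_mono) (auto simp: Od_def)
    then show ?thesis using sparse that unfolding Ev_def by fastforce
  qed
  have "card Ev \<le> card {4 * q, 4 * q + 2}" unfolding Ev_def by (intro card_mono) auto
  then have Ev2: "card Ev \<le> 2" by (simp add: card_insert_if)
  have "card Od \<le> card {4 * q + 1, 4 * q + 3}" unfolding Od_def by (intro card_mono) auto
  then have Od2: "card Od \<le> 2" by (simp add: card_insert_if)
  have union: "card (Ev \<union> Od) \<le> card Ev + card Od" by (rule card_Un_le)
  have "card (Ev \<union> Od) \<le> 2"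
  proof (cases "Ev = {} \<or> Od = {}")
    case False
    then obtain x y where "x \<in> Ev" "y \<in> Od" by blast
    then show ?thesis using union Ev_le[OF \<open>y \<in> Od\<close>] Od_le[OF \<open>x \<in> Ev\<close>] by simp
  qed (use Ev2 Od2 in auto)
  then show ?thesis unfolding block .
qed

lemma four_cycles_sparse_card:
  assumes sparse: "\<forall>x\<in>S. deg_in (four_cycles m) S x \<le> 1" and "S \<subseteq> {0..<m}"
  shows "card S \<le> sparse_bound m"
proof -
  define t where "t = m div 4"
  have m: "m = 4 * t + m mod 4" "m mod 4 < 4" unfolding t_def by simp_all
  have full_blocks: "card (S \<inter> {0..<4 * k}) \<le> 2 * k" for k
  proof (induction k)
    case (Suc k)
    have "S \<inter> {0..<4 * Suc k} = S \<inter> {0..<4 * k} \<union> S \<inter> {4 * k..<4 * k + 4}" by auto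
    then have "card (S \<inter> {0..<4 * Suc k}) \<le>
        card (S \<inter> {0..<4 * k}) + card (S \<inter> {4 * k..<4 * k + 4})"
      by (simp add: card_Un_le)
    then show ?case using Suc.IH four_cycles_sparse_block[OF assms, of k] by simp
  qed simp
  have "S = S \<inter> {0..<4 * t} \<union> S \<inter> {4 * t..<m}" using assms(2) m by auto
  then have "card S \<le> card (S \<inter> {0..<4 * t}) + card (S \<inter> {4 * t..<m})"
    by (metis card_Un_le)
  moreover have "card (S \<inter> {4 * t..<m}) \<le> card {4 * t..<m}" by (intro card_mono) auto
  moreover have "card (S \<inter> {4 * t..<m}) \<le> card (S \<inter> {4 * t..<4 * t + 4})"
    using assms(2) m by (intro card_mono) auto
  ultimately show ?thesis
    using full_blocks[of t] four_cycles_sparse_block[OF assms, of t] m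
    unfolding sparse_bound_def t_def[symmetric] by simp
qed

lemma cactus_ramsey_property_iff:
  assumes "5 \<le> i"
  shows "(\<forall>E. simple_graph {0..<n} E \<and> cactus {0..<n} E \<longrightarrow>
            (\<exists>S. dense_set E {0..<n} 1 i S) \<or> (\<exists>S. sparse_set E {0..<n} 1 j S))
         \<longleftrightarrow> j \<le> sparse_bound n"
proof
  assume property: "\<forall>E. simple_graph {0..<n} E \<and> cactus {0..<n} E \<longrightarrow>
            (\<exists>S. dense_set E {0..<n} 1 i S) \<or> (\<exists>S. sparse_set E {0..<n} 1 j S)"
  have "\<not> dense_set (four_cycles n) {0..<n} 1 i S" for S
    by (rule weak_cactus_no_dense_set[OF simple_graphD(2)[OF simple_graph_four_cycles]
          cactus_imp_weak_cactus[OF cactus_four_cycles] assms])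
  then obtain S where "sparse_set (four_cycles n) {0..<n} 1 j S"
    using property[rule_format, OF conjI[OF simple_graph_four_cycles cactus_four_cycles]] by blast
  then show "j \<le> sparse_bound n"
    using four_cycles_sparse_card[of S n] unfolding sparse_set_def by simp
next
  assume "j \<le> sparse_bound n"
  show "\<forall>E. simple_graph {0..<n} E \<and> cactus {0..<n} E \<longrightarrow>
            (\<exists>S. dense_set E {0..<n} 1 i S) \<or> (\<exists>S. sparse_set E {0..<n} 1 j S)"
  proof (intro allI impI disjI2)
    fix E assume E: "simple_graph {0..<n} E \<and> cactus {0..<n} E"
    obtain S where S: "S \<subseteq> {0..<n}" "\<forall>x\<in>S. deg_in E S x \<le> 1" "sparse_bound n \<le> card S"
      using weak_cactus_sparse_set[OF _ simple_graphD(2,3)[OF conjunct1[OF E]]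
          cactus_imp_weak_cactus[OF conjunct2[OF E]]] by auto
    obtain S' where "S' \<subseteq> S" "card S' = j"
      using obtain_subset_with_card_n[of j S] S(3) \<open>j \<le> sparse_bound n\<close> by auto
    have "finite S" using S(1) finite_subset by blast
    have "deg_in E S' x \<le> 1" if "x \<in> S'" for x
      using deg_in_mono[OF \<open>finite S\<close> \<open>S' \<subseteq> S\<close>, of E x] S(2) \<open>S' \<subseteq> S\<close> that by fastforce
    then have "sparse_set E {0..<n} 1 j S'"
      unfolding sparse_set_def using \<open>S' \<subseteq> S\<close> S(1) \<open>card S' = j\<close> by auto
    then show "\<exists>S. sparse_set E {0..<n} 1 j S" ..
  qed
qed

theorem theorem4p2:
  fixes i j :: nat
  assumes "i \<ge> 5" and "j \<ge> 1"
  shows "ramsey_class cactus 1 i j = (if odd j then 2 * j - 1 else 2 * j - 2)"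
proof -
  have "ramsey_class cactus 1 i j = (LEAST n. j \<le> sparse_bound n)"
    unfolding ramsey_class_def cactus_ramsey_property_iff[OF assms(1)] ..
  also have "\<dots> = (if odd j then 2 * j - 1 else 2 * j - 2)"
    unfolding sparse_bound_ge_iff[OF assms(2)] by (rule Least_equality) auto
  finally show ?thesis .
qed

end
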